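(* Let $S=sgp^+\langle A\mid R\rangle$ with $A$ finite, let $L\subseteq A^+$, and suppose $(A,L)$ is a prefix-automatic structure for $S$. Let $e$ be a new symbol, $B=A\cup\{e\}$, $K=L\cup\{e\}$, and $S^1=sgp^+\langle A\cup\{e\}\mid R,\ ea=ae=a\ (a\in A),\ ee=e\rangle$. Then $(B,K)$ is a prefix-automatic structure for $S^1$.
   Context: $A^*$ is the free monoid on $A$ (empty word $\varepsilon$), $A^+=A^*\setminus\{\varepsilon\}$. $sgp^+\langle A\mid R\rangle$ denotes the semigroup $A^+$ modulo the congruence generated by $R$. A language is regular if accepted by a finite state automaton. Let $\$\notin A$, $A(2,\$)=(A\cup\{\$\})^2\setminus\{(\$,\$)\}$. For $\alpha,\beta\in A^*$, $(\alpha,\beta)\delta_A^R$ is the word over $A(2,\$)$ obtained by padding the shorter of $\alpha,\beta$ on the right with $\$$'s to equal length and reading the pairs of letters position by position. For a semigroup $S$ generated by finite $A$ with canonical epimorphism $\phi:A^+\to S$ and a regular $L\subseteq A^+$ with $\phi(L)=S$, write $\alpha=\beta$ if $\phi(\alpha)=\phi(\beta)$ (with $\alpha\varepsilon\equiv\alpha$), and for $a\in A\cup\{\varepsilon\}$ let $L_a^\$=\{(\alpha,\beta)\delta^R_A:\alpha,\beta\in L,\ \alpha a=\beta\}$. $(A,L)$ is an automatic structure if every $L_a^\$$ is regular; it is a prefix-automatic structure if moreover $\{(\alpha,\beta)\delta_A^R:\alpha\in L,\ \beta\in\mathrm{Pref}(L),\ \alpha=\beta\}$ is regular, $\mathrm{Pref}(L)$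 being the set of prefixes of words in $L$. For $S^1$ the map sends $e$ to the identity. *)

theory Defs
  imports Main
begin

definition plus :: "'a set \<Rightarrow> 'a list set" where
  "plus A = {w. w \<in> lists A \<and> w \<noteq> []}"

definition is_congruence :: "'a set \<Rightarrow> ('a list \<times> 'a list) set \<Rightarrow> bool" where
  "is_congruence A C \<longleftrightarrow> equiv (plus A) C \<and>
     (\<forall>u v w. (u, v) \<in> C \<longrightarrow> w \<in> plus A \<longrightarrow> (w @ u, w @ v) \<in> C \<and> (u @ w, v @ w) \<in> C)"

text \<open>The congruence on A^+ generated by R: the least congruence containing R.
  Two words alpha, beta of A^+ represent the same element of sgp^+<A|R> iff
  (alpha, beta) is in this relation.\<close>
definition cong_gen :: "'a set \<Rightarrow> ('a list \<times> 'a list) set \<Rightarrow> ('a list \<times> 'a list) set" where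
  "cong_gen A R = \<Inter> {C. is_congruence A C \<and> R \<subseteq> C}"

definition regular :: "'b list set \<Rightarrow> bool" where
  "regular L \<longleftrightarrow> (\<exists>(Q::nat set) q0 \<delta> F. finite Q \<and> q0 \<in> Q \<and> (\<forall>q\<in>Q. \<forall>x. \<delta> q x \<in> Q)
      \<and> F \<subseteq> Q \<and> L = {w. foldl \<delta> q0 w \<in> F})"

text \<open>Padded convolution (alpha,beta)delta^R_A; None plays the role of the padding symbol \$.\<close>
definition conv :: "'a list \<Rightarrow> 'a list \<Rightarrow> ('a option \<times> 'a option) list" where
  "conv \<alpha> \<beta> = (let n = max (length \<alpha>) (length \<beta>) in
     zip (map Some \<alpha> @ replicate (n - length \<alpha>) None) (map Some \<beta> @ replicate (n - length \<beta>) None))"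

definition Pref :: "'a list set \<Rightarrow> 'a list set" where
  "Pref L = {u. \<exists>v. u @ v \<in> L}"

definition automatic_structure :: "'a set \<Rightarrow> ('a list \<times> 'a list) set \<Rightarrow> 'a list set \<Rightarrow> bool" where
  "automatic_structure A R L \<longleftrightarrow>
     finite A \<and> L \<subseteq> plus A \<and> regular L \<and>
     (\<forall>w\<in>plus A. \<exists>u\<in>L. (u, w) \<in> cong_gen A R) \<and>
     regular {conv \<alpha> \<beta> | \<alpha> \<beta>. \<alpha> \<in> L \<and> \<beta> \<in> L \<and> (\<alpha>, \<beta>) \<in> cong_gen A R} \<and>
     (\<forall>a\<in>A. regular {conv \<alpha> \<beta> | \<alpha> \<beta>. \<alpha> \<in> L \<and> \<beta> \<in> L \<and> (\<alpha> @ [a], \<beta>) \<in> cong_gen A R})"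

definition prefix_automatic_structure :: "'a set \<Rightarrow> ('a list \<times> 'a list) set \<Rightarrow> 'a list set \<Rightarrow> bool" where
  "prefix_automatic_structure A R L \<longleftrightarrow> automatic_structure A R L \<and>
     regular {conv \<alpha> \<beta> | \<alpha> \<beta>. \<alpha> \<in> L \<and> \<beta> \<in> Pref L \<and> (\<alpha>, \<beta>) \<in> cong_gen A R}"

end

theory Submission
  imports Defs
begin

text \<open>
  Erasing \<open>e\<close> sends words over \<open>B\<close> to words over \<open>A\<close>, and two nonempty words are equal in
  \<open>S\<^sup>1\<close> exactly when their erasures are equal in \<open>S\<close> or both are empty. So \<open>[e]\<close> is the only
  word of \<open>K\<close> representing the identity, the words of \<open>L\<close> keep their meaning, and each language
  of the new structure is the corresponding language of \<open>(A, L)\<close> plus finitely many words,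
  except for the multiplier of a letter \<open>a\<close>: since \<open>e a = a\<close>, it also contains the paddings
  \<open>conv [e] \<beta>\<close> of the representatives \<open>\<beta> \<in> L\<close> of \<open>a\<close>, a section of the equality language of \<open>L\<close>.
  Regularity is handled through left quotients (Myhill--Nerode).
\<close>

definition lquot :: "'b list set \<Rightarrow> 'b list \<Rightarrow> 'b list set" where
  "lquot L u = {w. u @ w \<in> L}"

lemma lquot_lquot [simp]: "lquot (lquot L v) u = lquot L (v @ u)"
  by (simp add: lquot_def)

lemma regular_of_automaton:
  fixes Q :: "'s set" and \<delta> :: "'s \<Rightarrow> 'b \<Rightarrow> 's"
  assumes "finite Q" "q0 \<in> Q" "\<forall>q\<in>Q. \<forall>x. \<delta> q x \<in> Q"
  shows "regular {w. foldl \<delta> q0 w \<in> F}"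
proof -
  obtain f where f: "bij_betw f Q {0..<card Q}"
    using ex_bij_betw_finite_nat[OF assms(1)] by blast
  then have inj: "inj_on f Q" and fQ: "f ` Q = {0..<card Q}"
    by (simp_all add: bij_betw_def)
  define \<delta>' where "\<delta>' n x = (if n \<in> f ` Q then f (\<delta> (inv_into Q f n) x) else n)" for n x
  have foldl_in: "q \<in> Q \<Longrightarrow> foldl \<delta> q w \<in> Q" for q w
    by (induction w arbitrary: q) (use assms(3) in auto)
  have simulate: "q \<in> Q \<Longrightarrow> foldl \<delta>' (f q) w = f (foldl \<delta> q w)" for q w
    by (induction w arbitrary: q) (use assms(3) inj in \<open>auto simp: \<delta>'_def\<close>)
  have "{w. foldl \<delta> q0 w \<in> F} = {w. foldl \<delta>' (f q0) w \<in> f ` (F \<inter> Q)}"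
    using simulate[OF assms(2)] foldl_in[OF assms(2)] inj by (auto dest: inj_onD)
  moreover have "\<forall>q\<in>{0..<card Q}. \<forall>x. \<delta>' q x \<in> {0..<card Q}"
    using assms(3) inj fQ[symmetric] by (auto simp: \<delta>'_def)
  ultimately show ?thesis
    unfolding regular_def using fQ assms(2)
    by (intro exI[of _ "{0..<card Q}"] exI[of _ "f q0"] exI[of _ \<delta>'] exI[of _ "f ` (F \<inter> Q)"]) auto
qed

lemma regular_iff_finite_lquot: "regular L \<longleftrightarrow> finite (range (lquot L))"
proof
  assume "regular L"
  then obtain Q :: "nat set" and q0 \<delta> F where Q: "finite Q" "q0 \<in> Q" "\<forall>q\<in>Q. \<forall>x. \<delta> q x \<in> Q"
    and L: "L = {w. foldl \<delta> q0 w \<in> F}" unfolding regular_def by blast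
  have "foldl \<delta> q w \<in> Q" if "q \<in> Q" for q w
    using that by (induction w arbitrary: q) (use Q(3) in auto)
  then have "range (lquot L) \<subseteq> (\<lambda>q. {w. foldl \<delta> q w \<in> F}) ` Q"
    using Q(2) by (auto simp: lquot_def L)
  then show "finite (range (lquot L))"
    using Q(1) finite_subset by blast
next
  assume fin: "finite (range (lquot L))"
  have step: "foldl (\<lambda>S x. lquot S [x]) (lquot L u) w = lquot L (u @ w)" for u w
    by (induction w arbitrary: u) simp_all
  have L0: "lquot L [] = L"
    by (simp add: lquot_def)
  have "L = {w. foldl (\<lambda>S x. lquot S [x]) L w \<in> {S. [] \<in> S}}"
    using step[of "[]"] by (auto simp: L0 lquot_def)
  moreover have "regular {w. foldl (\<lambda>S x. lquot S [x]) L w \<in> {S. [] \<in> S}}"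
    by (rule regular_of_automaton[OF fin]) (use L0 in \<open>auto intro: range_eqI\<close>)
  ultimately show "regular L" by simp
qed

lemma regular_lquot: "regular L \<Longrightarrow> regular (lquot L v)"
  unfolding regular_iff_finite_lquot lquot_lquot
  by (rule finite_subset[of _ "range (lquot L)"]) auto

lemma regular_Un:
  assumes "regular L1" "regular L2" shows "regular (L1 \<union> L2)"
proof -
  have "range (lquot (L1 \<union> L2)) \<subseteq> (\<lambda>(X, Y). X \<union> Y) ` (range (lquot L1) \<times> range (lquot L2))"
  proof
    fix X assume "X \<in> range (lquot (L1 \<union> L2))"
    then obtain u where "X = lquot (L1 \<union> L2) u" by blast
    then have "X = (\<lambda>(X, Y). X \<union> Y) (lquot L1 u, lquot L2 u)" by (auto simp: lquot_def)
    then show "X \<in> (\<lambda>(X, Y). X \<union> Y) ` (range (lquot L1) \<times> range (lquot L2))" by blast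
  qed
  then show ?thesis
    using assms unfolding regular_iff_finite_lquot by (meson finite_SigmaI finite_imageI finite_subset)
qed

lemma regular_empty: "regular {}"
  unfolding regular_iff_finite_lquot by (rule finite_subset[of _ "{{}}"]) (auto simp: lquot_def)

lemma regular_singleton: "regular {w}"
  unfolding regular_iff_finite_lquot
proof (rule finite_subset)
  show "range (lquot {w}) \<subseteq> insert {} ((\<lambda>k. {drop k w}) ` {..length w})"
  proof
    fix X assume "X \<in> range (lquot {w})"
    then obtain u where X: "X = lquot {w} u" by blast
    show "X \<in> insert {} ((\<lambda>k. {drop k w}) ` {..length w})"
    proof (cases "\<exists>v. u @ v = w")
      case True
      then have "X = {drop (length u) w}" and "length u \<le> length w"
        by (auto simp: X lquot_def)
      then show ?thesis by blast
    next
      case False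
      then show ?thesis by (simp add: X lquot_def)
    qed
  qed
qed simp

lemma regular_insert: "regular L \<Longrightarrow> regular (insert w L)"
  using regular_Un[OF regular_singleton[of w]] by simp

lemma regular_UN: "finite I \<Longrightarrow> (\<And>i. i \<in> I \<Longrightarrow> regular (f i)) \<Longrightarrow> regular (\<Union>i\<in>I. f i)"
  by (induction I rule: finite_induct) (auto simp: regular_empty intro: regular_Un)

lemma regular_image_Cons:
  assumes "regular L" shows "regular ((#) c ` L)"
proof -
  have "lquot ((#) c ` L) (x # u) = (if x = c then lquot L u else {})" for x u
    by (auto simp: lquot_def)
  then have "lquot ((#) c ` L) u \<in> insert ((#) c ` L) (insert {} (range (lquot L)))" for u
    by (cases u) (auto simp: lquot_def)
  then have "range (lquot ((#) c ` L)) \<subseteq> insert ((#) c ` L) (insert {} (range (lquot L)))"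
    by blast
  then show ?thesis
    using assms unfolding regular_iff_finite_lquot by (simp add: finite_subset)
qed

lemma regular_image_map_inj:
  assumes h: "inj h" and L: "regular L" shows "regular (map h ` L)"
proof -
  let ?pre = "\<lambda>X. {w. w \<in> lists (range h) \<and> map (inv h) w \<in> X}"
  have map_inv: "w \<in> lists (range h) \<Longrightarrow> map h (map (inv h) w) = w" for w
    by (induction w) (auto simp: inv_f_f[OF h])
  have image_eq: "map h ` X = ?pre X" for X
  proof (intro set_eqI iffI)
    fix w assume "w \<in> ?pre X"
    then show "w \<in> map h ` X"
      using map_inv by (metis (no_types, lifting) image_eqI mem_Collect_eq)
  qed (auto simp: inv_f_f[OF h] comp_def)
  have "lquot (map h ` L) u \<in> insert {} (?pre ` range (lquot L))" for u
  proof (cases "u \<in> lists (range h)")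
    case True
    then have "lquot (map h ` L) u = ?pre (lquot L (map (inv h) u))"
      by (auto simp: lquot_def image_eq)
    then show ?thesis by blast
  next
    case False
    then show ?thesis by (auto simp: lquot_def image_eq)
  qed
  then have "range (lquot (map h ` L)) \<subseteq> insert {} (?pre ` range (lquot L))"
    by blast
  then show ?thesis
    using L unfolding regular_iff_finite_lquot by (meson finite_imageI finite_insert finite_subset)
qed

lemma conv_Nil_Nil [simp]: "conv [] [] = []"
  and conv_Cons_Nil [simp]: "conv (a # \<alpha>) [] = (Some a, None) # conv \<alpha> []"
  and conv_Nil_Cons [simp]: "conv [] (b # \<beta>) = (None, Some b) # conv [] \<beta>"
  and conv_Cons_Cons [simp]: "conv (a # \<alpha>) (b # \<beta>) = (Some a, Some b) # conv \<alpha> \<beta>"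
  by (simp_all add: conv_def Let_def)

lemma conv_Nil_left: "conv [] \<beta> = map (\<lambda>b. (None, Some b)) \<beta>"
  by (induction \<beta>) simp_all

lemma conv_Nil_right: "conv \<alpha> [] = map (\<lambda>a. (Some a, None)) \<alpha>"
  by (induction \<alpha>) simp_all

lemma conv_append_right:
  "conv \<alpha> (u @ w) = conv (take (length u) \<alpha>) u @ conv (drop (length u) \<alpha>) w"
proof (induction u arbitrary: \<alpha>)
  case (Cons x u)
  then show ?case by (cases \<alpha>) (simp_all add: conv_Nil_left)
qed simp

lemma map_fst_conv: "map fst (conv \<alpha> \<beta>) = map Some \<alpha> @ replicate (length \<beta> - length \<alpha>) None"
  and map_snd_conv: "map snd (conv \<alpha> \<beta>) = map Some \<beta> @ replicate (length \<alpha> - length \<beta>) None"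
  by (induction \<alpha> \<beta> rule: list_induct2') (simp_all add: conv_Nil_left conv_Nil_right comp_def map_replicate_const)

lemma strip_padding: "map the (takeWhile (\<lambda>x. x \<noteq> None) (map Some \<alpha> @ replicate k None)) = \<alpha>"
  by (induction \<alpha>) (cases k; simp)+

lemma conv_inj: "conv \<alpha> \<beta> = conv \<alpha>' \<beta>' \<Longrightarrow> \<alpha> = \<alpha>' \<and> \<beta> = \<beta>'"
  by (metis map_fst_conv map_snd_conv strip_padding)

lemma regular_conv_fixed_fst:
  assumes M: "regular M" shows "regular {\<beta>. conv \<alpha> \<beta> \<in> M}"
proof -
  let ?T = "{\<beta>. conv \<alpha> \<beta> \<in> M}"
  let ?S = "(\<lambda>(k, X). {w. conv (drop k \<alpha>) w \<in> X}) ` ({..length \<alpha>} \<times> range (lquot M))"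
  have "lquot ?T u \<in> ?S" for u
  proof -
    let ?k = "min (length u) (length \<alpha>)"
    have "drop (length u) \<alpha> = drop ?k \<alpha>" by (simp add: min_def)
    then have "lquot ?T u = {w. conv (drop ?k \<alpha>) w \<in> lquot M (conv (take (length u) \<alpha>) u)}"
      by (auto simp: lquot_def conv_append_right)
    then show ?thesis by force
  qed
  then have "range (lquot ?T) \<subseteq> ?S" by blast
  then show ?thesis
    using M unfolding regular_iff_finite_lquot
    by (meson finite_SigmaI finite_atMost finite_imageI finite_subset)
qed

lemma regular_conv_single:
  assumes T: "regular T" and A: "finite A" and TA: "T \<subseteq> plus A"
  shows "regular (conv [c] ` T)"
proof -
  have conv_single: "conv [c] (b # \<beta>) = (Some c, Some b) # map (\<lambda>b. (None, Some b)) \<beta>" for b \<beta>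
    by (simp add: conv_Nil_left)
  have "conv [c] ` T = (\<Union>b\<in>A. (#) (Some c, Some b) ` map (\<lambda>b. (None, Some b)) ` lquot T [b])"
  proof (intro set_eqI iffI)
    fix w assume "w \<in> conv [c] ` T"
    then obtain b \<beta> where "b # \<beta> \<in> T" "b \<in> A" "w = conv [c] (b # \<beta>)"
      using TA by (auto simp: plus_def neq_Nil_conv)
    then show "w \<in> (\<Union>b\<in>A. (#) (Some c, Some b) ` map (\<lambda>b. (None, Some b)) ` lquot T [b])"
      by (auto simp: conv_single conv_Nil_left lquot_def)
  next
    fix w assume "w \<in> (\<Union>b\<in>A. (#) (Some c, Some b) ` map (\<lambda>b. (None, Some b)) ` lquot T [b])"
    then obtain b \<beta> where "b # \<beta> \<in> T" "w = conv [c] (b # \<beta>)"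
      by (auto simp: lquot_def conv_single conv_Nil_left)
    then show "w \<in> conv [c] ` T" by blast
  qed
  moreover have "inj (\<lambda>b. (None :: 'a option, Some b))"
    by (simp add: inj_def)
  ultimately show ?thesis
    using A by (auto intro!: regular_UN regular_image_Cons regular_image_map_inj regular_lquot T)
qed

lemma plus_append: "u \<in> plus A \<Longrightarrow> w \<in> plus A \<Longrightarrow> u @ w \<in> plus A"
  by (simp add: plus_def)

lemma is_congruenceI:
  assumes "equiv (plus A) C"
    and "\<And>u v w. (u, v) \<in> C \<Longrightarrow> w \<in> plus A \<Longrightarrow> (w @ u, w @ v) \<in> C"
    and "\<And>u v w. (u, v) \<in> C \<Longrightarrow> w \<in> plus A \<Longrightarrow> (u @ w, v @ w) \<in> C"
  shows "is_congruence A C"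
  using assms unfolding is_congruence_def by blast

context
  fixes A :: "'a set" and C :: "('a list \<times> 'a list) set"
  assumes cong: "is_congruence A C"
begin

lemma congruence_equiv: "equiv (plus A) C"
  using cong by (simp add: is_congruence_def)

lemma congruence_field: "(u, v) \<in> C \<Longrightarrow> u \<in> plus A \<and> v \<in> plus A"
  using equiv_class_eq_iff[OF congruence_equiv] by blast

lemma congruence_refl: "u \<in> plus A \<Longrightarrow> (u, u) \<in> C"
  using congruence_equiv by (simp add: equiv_def refl_on_def)

lemma congruence_sym: "(u, v) \<in> C \<Longrightarrow> (v, u) \<in> C"
  using congruence_equiv by (meson equiv_def symD)

lemma congruence_trans: "(u, v) \<in> C \<Longrightarrow> (v, w) \<in> C \<Longrightarrow> (u, w) \<in> C"
  using congruence_equiv by (meson equiv_def transD)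

lemma congruence_class_eq: "(u, v) \<in> C \<Longrightarrow> (u, w) \<in> C \<longleftrightarrow> (v, w) \<in> C"
  using congruence_sym congruence_trans by meson

lemma congruence_context:
  assumes "(p, q) \<in> C" "u \<in> lists A" "v \<in> lists A"
  shows "(u @ p @ v, u @ q @ v) \<in> C"
proof -
  have left: "(u @ p, u @ q) \<in> C"
    using assms cong by (cases "u = []") (auto simp: is_congruence_def plus_def)
  show ?thesis
    using left assms(3) cong by (cases "v = []") (force simp: is_congruence_def plus_def)+
qed

lemma congruence_adjoin_Nil_equiv: "equiv (lists A) (insert ([], []) C)"
proof (rule equivI)
  have "(u, v) \<in> C \<Longrightarrow> u \<noteq> [] \<and> v \<noteq> []" for u v
    using congruence_field by (simp add: plus_def)
  then show "trans (insert ([], []) C)"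
    by (auto intro!: transI intro: congruence_trans)
  show "sym (insert ([], []) C)"
    by (auto intro!: symI intro: congruence_sym)
  show "insert ([], []) C \<subseteq> lists A \<times> lists A"
    using congruence_field by (auto simp: plus_def)
  show "refl_on (lists A) (insert ([], []) C)"
  proof (rule refl_onI)
    show "(u, u) \<in> insert ([], []) C" if "u \<in> lists A" for u
      using that congruence_refl by (cases "u = []") (auto simp: plus_def)
  qed
qed

lemma congruence_adjoin_Nil_context:
  assumes "(p, q) \<in> insert ([], []) C" "u \<in> lists A" "v \<in> lists A"
  shows "(u @ p @ v, u @ q @ v) \<in> insert ([], []) C"
proof (cases "(p, q) = ([], [])")
  case True
  then show ?thesis
    using assms(2,3) congruence_adjoin_Nil_equiv by (simp add: equiv_def refl_on_def del: insert_iff)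
next
  case False
  then show ?thesis using assms congruence_context by blast
qed

end

lemma is_congruence_Inter:
  assumes F: "F \<noteq> {}" "\<And>C. C \<in> F \<Longrightarrow> is_congruence A C"
  shows "is_congruence A (\<Inter>F)"
proof (rule is_congruenceI)
  show "equiv (plus A) (\<Inter>F)"
  proof (rule equivI)
    show "\<Inter>F \<subseteq> plus A \<times> plus A"
      using F congruence_field by fast
    show "refl_on (plus A) (\<Inter>F)"
      using F(2) congruence_refl by (fast intro: refl_onI)
    show "sym (\<Inter>F)"
      using F(2) congruence_sym by (fast intro: symI)
    show "trans (\<Inter>F)"
      using F(2) congruence_trans by (fast intro: transI)
  qed
qed (use F(2) in \<open>auto simp: is_congruence_def\<close>)

lemma cong_gen_is_congruence:
  assumes "R \<subseteq> plus A \<times> plus A" shows "is_congruence A (cong_gen A R)"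
proof -
  have "is_congruence A (plus A \<times> plus A)"
    by (rule is_congruenceI) (auto simp: equiv_def refl_on_def sym_def trans_def intro: plus_append)
  then show ?thesis
    unfolding cong_gen_def using assms by (intro is_congruence_Inter) auto
qed

lemma cong_gen_least: "is_congruence A C \<Longrightarrow> R \<subseteq> C \<Longrightarrow> cong_gen A R \<subseteq> C"
  unfolding cong_gen_def by blast

lemma cong_gen_base: "R \<subseteq> cong_gen A R"
  unfolding cong_gen_def by blast

lemma is_congruence_restrict:
  assumes C: "is_congruence B C" and AB: "A \<subseteq> B"
  shows "is_congruence A (C \<inter> plus A \<times> plus A)"
proof (rule is_congruenceI)
  have "plus A \<subseteq> plus B" using AB by (auto simp: plus_def)
  then show "equiv (plus A) (C \<inter> plus A \<times> plus A)"
    using congruence_refl[OF C] congruence_sym[OF C] congruence_trans[OF C]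
    by (intro equivI refl_onI symI transI) fast+
next
  fix u v w assume "(u, v) \<in> C \<inter> plus A \<times> plus A" "w \<in> plus A"
  moreover have "w \<in> lists B" using \<open>w \<in> plus A\<close> AB by (auto simp: plus_def)
  ultimately show "(w @ u, w @ v) \<in> C \<inter> plus A \<times> plus A"
    "(u @ w, v @ w) \<in> C \<inter> plus A \<times> plus A"
    using congruence_context[OF C, of u v w "[]"] congruence_context[OF C, of u v "[]" w]
    by (auto simp: plus_def)
qed

locale identity_adjunction =
  fixes A :: "'a set" and R :: "('a list \<times> 'a list) set" and e :: 'a
  assumes R_plus: "R \<subseteq> plus A \<times> plus A" and e_notin: "e \<notin> A"
begin

abbreviation B :: "'a set" where "B \<equiv> insert e A"

definition R1 :: "('a list \<times> 'a list) set" where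
  "R1 = R \<union> {([e, a], [a]) | a. a \<in> A} \<union> {([a, e], [a]) | a. a \<in> A} \<union> {([e, e], [e])}"

abbreviation congS :: "('a list \<times> 'a list) set" where "congS \<equiv> cong_gen A R"

abbreviation congS1 :: "('a list \<times> 'a list) set" where "congS1 \<equiv> cong_gen B R1"

lemma congS_is_congruence: "is_congruence A congS"
  using cong_gen_is_congruence[OF R_plus] .

lemma congS1_is_congruence: "is_congruence B congS1"
  using R_plus by (intro cong_gen_is_congruence) (auto simp: R1_def plus_def)

lemma Nil_notin_congS [simp]: "([], v) \<notin> congS" "(u, []) \<notin> congS"
  using congruence_field[OF congS_is_congruence] by (auto simp: plus_def)

lemma removeAll_lists [simp]: "u \<in> lists A \<Longrightarrow> removeAll e u = u"
  using e_notin by auto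

lemma removeAll_lists_insert: "u \<in> lists B \<Longrightarrow> removeAll e u \<in> lists A"
  by (induction u) auto

text \<open>Erasing \<open>e\<close> is a monoid homomorphism onto \<open>A\<^sup>*\<close>, and adjoining \<open>([], [])\<close> to the congruence of
  \<open>S\<close> presents the monoid \<open>S\<^sup>1\<close> on \<open>A\<^sup>*\<close>; pulling back along erasure gives a congruence on \<open>B\<^sup>+\<close>.\<close>
definition erased_cong :: "('a list \<times> 'a list) set" where
  "erased_cong = {(u, v). u \<in> plus B \<and> v \<in> plus B \<and>
     (removeAll e u, removeAll e v) \<in> insert ([], []) congS}"

lemma erased_cong_is_congruence: "is_congruence B erased_cong"
proof (rule is_congruenceI)
  note equiv0 = congruence_adjoin_Nil_equiv[OF congS_is_congruence]
  show "equiv (plus B) erased_cong"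
  proof (rule equivI)
    show "erased_cong \<subseteq> plus B \<times> plus B"
      by (auto simp: erased_cong_def)
    show "refl_on (plus B) erased_cong"
    proof (rule refl_onI)
      fix u assume u: "u \<in> plus B"
      then have "removeAll e u \<in> lists A"
        using removeAll_lists_insert by (simp add: plus_def)
      then show "(u, u) \<in> erased_cong"
        using equiv0 u unfolding erased_cong_def equiv_def refl_on_def by blast
    qed
    show "sym erased_cong"
      using equiv0 by (auto simp: erased_cong_def equiv_def sym_def simp del: insert_iff)
    show "trans erased_cong"
      using equiv0 unfolding erased_cong_def equiv_def trans_def by blast
  qed
next
  fix u v w assume uv: "(u, v) \<in> erased_cong" and w: "w \<in> plus B"
  have "removeAll e w \<in> lists A"
    using w removeAll_lists_insert by (simp add: plus_def)
  moreover have "(removeAll e u, removeAll e v) \<in> insert ([], []) congS"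
    using uv by (simp add: erased_cong_def)
  ultimately have
    "(removeAll e w @ removeAll e u @ [], removeAll e w @ removeAll e v @ []) \<in> insert ([], []) congS"
    "([] @ removeAll e u @ removeAll e w, [] @ removeAll e v @ removeAll e w) \<in> insert ([], []) congS"
    by (simp_all only: congruence_adjoin_Nil_context[OF congS_is_congruence] lists.Nil)
  then show "(w @ u, w @ v) \<in> erased_cong" "(u @ w, v @ w) \<in> erased_cong"
    using uv w plus_append[of w B] plus_append[of _ B w] by (simp_all add: erased_cong_def)
qed

lemma R1_subset_erased_cong: "R1 \<subseteq> erased_cong"
proof -
  have "(u, v) \<in> erased_cong" if "(u, v) \<in> R" for u v
  proof -
    have "u \<in> plus A" "v \<in> plus A" using that R_plus by auto
    then show ?thesis
      using that cong_gen_base[of R A] by (auto simp: erased_cong_def plus_def)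
  qed
  moreover have "([e, a], [a]) \<in> erased_cong" "([a, e], [a]) \<in> erased_cong" if "a \<in> A" for a
  proof -
    have "e \<noteq> a" using that e_notin by blast
    then show "([e, a], [a]) \<in> erased_cong" "([a, e], [a]) \<in> erased_cong"
      using that congruence_refl[OF congS_is_congruence, of "[a]"] by (simp_all add: erased_cong_def plus_def)
  qed
  moreover have "([e, e], [e]) \<in> erased_cong"
    by (simp add: erased_cong_def plus_def)
  ultimately show ?thesis
    by (auto simp: R1_def)
qed

lemma congS1_subset_erased_cong: "congS1 \<subseteq> erased_cong"
  by (rule cong_gen_least[OF erased_cong_is_congruence R1_subset_erased_cong])

lemma congS_subset_congS1: "congS \<subseteq> congS1"
proof -
  have "is_congruence A (congS1 \<inter> plus A \<times> plus A)"
    by (rule is_congruence_restrict[OF congS1_is_congruence]) auto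
  moreover have "R \<subseteq> congS1 \<inter> plus A \<times> plus A"
    using R_plus cong_gen_base[of R1 B] by (auto simp: R1_def)
  ultimately show ?thesis
    using cong_gen_least by blast
qed

lemma congS1_delete_unit:
  assumes "u \<in> lists B" "v \<in> lists B" "u @ v \<noteq> []"
  shows "(u @ e # v, u @ v) \<in> congS1"
proof (cases u rule: rev_cases)
  case Nil
  then obtain x v' where v: "v = x # v'" using assms(3) by (cases v) auto
  have "([e, x], [x]) \<in> congS1"
    using cong_gen_base[of R1 B] assms(2) v by (auto simp: R1_def)
  then show ?thesis
    using congruence_context[OF congS1_is_congruence, of "[e, x]" "[x]" "[]" v'] assms(2) Nil v
    by simp
next
  case (snoc u' x)
  have "([x, e], [x]) \<in> congS1"
    using cong_gen_base[of R1 B] assms(1) snoc by (auto simp: R1_def)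
  then show ?thesis
    using congruence_context[OF congS1_is_congruence, of "[x, e]" "[x]" u' v] assms(1,2) snoc
    by simp
qed

lemma congS1_erase:
  assumes "u \<in> plus B"
  shows "(u, if removeAll e u = [] then [e] else removeAll e u) \<in> congS1"
  using assms
proof (induction "length u" arbitrary: u rule: less_induct)
  case less
  let ?nf = "\<lambda>u. if removeAll e u = [] then [e] else removeAll e u"
  show ?case
  proof (cases "e \<in> set u \<and> u \<noteq> [e]")
    case True
    then obtain p q where u: "u = p @ e # q" by (meson split_list)
    have "p @ e # q \<in> lists B"
      using less.prems u by (simp add: plus_def)
    moreover have "p @ q \<noteq> []"
      using True u by auto
    ultimately have pq: "p \<in> lists B" "q \<in> lists B" "p @ q \<noteq> []"
      by simp_all
    have "(u, p @ q) \<in> congS1"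
      using congS1_delete_unit[OF pq] u by simp
    moreover have "(p @ q, ?nf (p @ q)) \<in> congS1"
      by (rule less.hyps) (use pq u in \<open>simp_all add: plus_def\<close>)
    ultimately have "(u, ?nf (p @ q)) \<in> congS1"
      by (rule congruence_trans[OF congS1_is_congruence])
    moreover have "removeAll e u = removeAll e (p @ q)"
      using u by simp
    ultimately show ?thesis
      by (simp only:)
  next
    case False
    moreover have "u \<noteq> []"
      using less.prems by (simp add: plus_def)
    ultimately have "?nf u = u"
      by (cases "e \<in> set u") simp_all
    then show ?thesis
      using congruence_refl[OF congS1_is_congruence less.prems] by simp
  qed
qed

lemma congS1_iff:
  "(u, v) \<in> congS1 \<longleftrightarrow> u \<in> plus B \<and> v \<in> plus B \<and>
     (removeAll e u, removeAll e v) \<in> insert ([], []) congS"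
proof
  assume "(u, v) \<in> congS1"
  then show "u \<in> plus B \<and> v \<in> plus B \<and> (removeAll e u, removeAll e v) \<in> insert ([], []) congS"
    using congS1_subset_erased_cong by (auto simp: erased_cong_def)
next
  assume uv: "u \<in> plus B \<and> v \<in> plus B \<and> (removeAll e u, removeAll e v) \<in> insert ([], []) congS"
  let ?nf = "\<lambda>u. if removeAll e u = [] then [e] else removeAll e u"
  have "(?nf u, ?nf v) \<in> congS1"
    using uv congS_subset_congS1 congruence_refl[OF congS1_is_congruence, of "[e]"]
    by (auto simp: plus_def)
  then show "(u, v) \<in> congS1"
    using uv congS1_erase congruence_sym[OF congS1_is_congruence]
      congruence_trans[OF congS1_is_congruence] by meson
qed

lemma congS1_iff_erase:
  assumes "u \<in> lists B" "\<beta> \<in> lists A"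
  shows "(u, \<beta>) \<in> congS1 \<longleftrightarrow> (removeAll e u, \<beta>) \<in> congS"
proof -
  have "(removeAll e u, \<beta>) \<in> congS \<Longrightarrow> u \<noteq> [] \<and> \<beta> \<noteq> []"
    by (cases u; cases \<beta>) auto
  then show ?thesis
    using assms unfolding congS1_iff by (auto simp: plus_def)
qed

lemma congS1_unit_iff:
  assumes "u \<in> lists B"
  shows "(u, [e]) \<in> congS1 \<longleftrightarrow> u \<noteq> [] \<and> removeAll e u = []"
  using assms unfolding congS1_iff by (auto simp: plus_def)

lemma congS1_lists_iff:
  assumes "u \<in> lists A" "v \<in> lists A"
  shows "(u, v) \<in> congS1 \<longleftrightarrow> (u, v) \<in> congS"
proof -
  have "u \<in> lists B" using assms(1) by auto
  then show ?thesis using congS1_iff_erase assms by simp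
qed

lemma unit_congS1_lists: "v \<in> lists A \<Longrightarrow> ([e], v) \<notin> congS1 \<and> (v, [e]) \<notin> congS1"
  using congS1_iff_erase[of "[e]" v] congS1_unit_iff[of v] by auto

lemma unit_congS1: "([e], [e]) \<in> congS1"
  using congS1_unit_iff by simp

lemma congS1_snoc_unit: "u \<in> plus B \<Longrightarrow> (u @ [e], u) \<in> congS1"
  using congS1_delete_unit[of u "[]"] by (simp add: plus_def)

lemma congS1_Cons_unit: "u \<in> plus B \<Longrightarrow> (e # u, u) \<in> congS1"
  using congS1_delete_unit[of "[]" u] by (simp add: plus_def)

lemma Nil_notin_congS1: "(u, []) \<notin> congS1"
  using congruence_field[OF congS1_is_congruence] by (auto simp: plus_def)

end

locale prefix_automatic_adjunction = identity_adjunction +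
  fixes L :: "'a list set"
  assumes prefix_automatic: "prefix_automatic_structure A R L"
begin

abbreviation K :: "'a list set" where "K \<equiv> insert [e] L"

lemma finite_A: "finite A"
  and L_plus: "L \<subseteq> plus A"
  and regular_L: "regular L"
  and L_represents: "\<forall>w\<in>plus A. \<exists>u\<in>L. (u, w) \<in> congS"
  and regular_equality: "regular {conv \<alpha> \<beta> | \<alpha> \<beta>. \<alpha> \<in> L \<and> \<beta> \<in> L \<and> (\<alpha>, \<beta>) \<in> congS}"
  and regular_multiplier:
    "\<forall>a\<in>A. regular {conv \<alpha> \<beta> | \<alpha> \<beta>. \<alpha> \<in> L \<and> \<beta> \<in> L \<and> (\<alpha> @ [a], \<beta>) \<in> congS}"
  and regular_prefix: "regular {conv \<alpha> \<beta> | \<alpha> \<beta>. \<alpha> \<in> L \<and> \<beta> \<in> Pref L \<and> (\<alpha>, \<beta>) \<in> congS}"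
  using prefix_automatic unfolding prefix_automatic_structure_def automatic_structure_def by auto

lemma L_lists: "\<alpha> \<in> L \<Longrightarrow> \<alpha> \<in> lists A \<and> \<alpha> \<noteq> []"
  using L_plus by (auto simp: plus_def)

lemma Pref_L_lists: "\<beta> \<in> Pref L \<Longrightarrow> \<beta> \<in> lists A"
  using L_plus by (auto simp: Pref_def plus_def)

lemma K_plus: "K \<subseteq> plus B"
  using L_plus by (auto simp: plus_def)

lemma K_represents: "\<forall>w\<in>plus B. \<exists>u\<in>K. (u, w) \<in> congS1"
proof
  fix w assume w: "w \<in> plus B"
  show "\<exists>u\<in>K. (u, w) \<in> congS1"
  proof (cases "removeAll e w = []")
    case True
    then show ?thesis
      using w congS1_unit_iff congruence_sym[OF congS1_is_congruence] by (auto simp: plus_def)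
  next
    case False
    then have "removeAll e w \<in> plus A"
      using w removeAll_lists_insert by (simp add: plus_def)
    then obtain u where u: "u \<in> L" "(u, removeAll e w) \<in> congS"
      using L_represents by blast
    moreover have "w \<in> lists B" using w by (simp add: plus_def)
    ultimately have "(w, u) \<in> congS1"
      using L_lists[OF u(1)] congS1_iff_erase congS_is_congruence congruence_sym by blast
    then have "(u, w) \<in> congS1"
      by (rule congruence_sym[OF congS1_is_congruence])
    then show ?thesis
      using u(1) by blast
  qed
qed

lemma congS1_L_iff: "\<alpha> \<in> L \<Longrightarrow> \<beta> \<in> L \<Longrightarrow> (\<alpha>, \<beta>) \<in> congS1 \<longleftrightarrow> (\<alpha>, \<beta>) \<in> congS"
  using L_lists congS1_lists_iff by blast

lemma unit_congS1_L: "\<alpha> \<in> L \<Longrightarrow> ([e], \<alpha>) \<notin> congS1" "\<alpha> \<in> L \<Longrightarrow> (\<alpha>, [e]) \<notin> congS1"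
  using L_lists unit_congS1_lists by blast+

lemma equality_language_K:
  "{conv \<alpha> \<beta> | \<alpha> \<beta>. \<alpha> \<in> K \<and> \<beta> \<in> K \<and> (\<alpha>, \<beta>) \<in> congS1}
    = insert (conv [e] [e]) {conv \<alpha> \<beta> | \<alpha> \<beta>. \<alpha> \<in> L \<and> \<beta> \<in> L \<and> (\<alpha>, \<beta>) \<in> congS}"
  (is "?lhs = _")
proof -
  have "conv [e] [e] \<in> ?lhs"
    using unit_congS1 by blast
  then show ?thesis
    using congS1_L_iff unit_congS1_L by auto
qed


lemma multiplier_language_K_unit:
  "{conv \<alpha> \<beta> | \<alpha> \<beta>. \<alpha> \<in> K \<and> \<beta> \<in> K \<and> (\<alpha> @ [e], \<beta>) \<in> congS1}
    = {conv \<alpha> \<beta> | \<alpha> \<beta>. \<alpha> \<in> K \<and> \<beta> \<in> K \<and> (\<alpha>, \<beta>) \<in> congS1}"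
proof -
  have "(\<alpha> @ [e], \<beta>) \<in> congS1 \<longleftrightarrow> (\<alpha>, \<beta>) \<in> congS1" if "\<alpha> \<in> K" for \<alpha> \<beta>
    using that K_plus congS1_snoc_unit congruence_class_eq[OF congS1_is_congruence] by blast
  then show ?thesis
    by blast
qed

lemma regular_letter_representatives: "a \<in> A \<Longrightarrow> regular {\<beta> \<in> L. ([a], \<beta>) \<in> congS}"
proof -
  assume "a \<in> A"
  then have "[a] \<in> plus A"
    by (simp add: plus_def)
  then obtain \<alpha> where \<alpha>: "\<alpha> \<in> L" "(\<alpha>, [a]) \<in> congS"
    using L_represents by blast
  have "(\<alpha>, \<beta>) \<in> congS \<longleftrightarrow> ([a], \<beta>) \<in> congS" for \<beta>
    using congruence_class_eq[OF congS_is_congruence \<alpha>(2)] .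
  then have "{\<beta> \<in> L. ([a], \<beta>) \<in> congS}
      = {\<beta>. conv \<alpha> \<beta> \<in> {conv \<alpha> \<beta> | \<alpha> \<beta>. \<alpha> \<in> L \<and> \<beta> \<in> L \<and> (\<alpha>, \<beta>) \<in> congS}}"
    using \<alpha>(1) by (auto dest: conv_inj)
  then show ?thesis
    using regular_conv_fixed_fst[OF regular_equality] by simp
qed

lemma multiplier_language_K_letter:
  assumes a: "a \<in> A"
  shows "{conv \<alpha> \<beta> | \<alpha> \<beta>. \<alpha> \<in> K \<and> \<beta> \<in> K \<and> (\<alpha> @ [a], \<beta>) \<in> congS1}
    = {conv \<alpha> \<beta> | \<alpha> \<beta>. \<alpha> \<in> L \<and> \<beta> \<in> L \<and> (\<alpha> @ [a], \<beta>) \<in> congS}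
      \<union> conv [e] ` {\<beta> \<in> L. ([a], \<beta>) \<in> congS}" (is "?lhs = ?rhs")
proof -
  have \<alpha>a: "\<alpha> @ [a] \<in> lists A" if "\<alpha> \<in> L" for \<alpha>
    using that a L_lists by simp
  have L_iff: "(\<alpha> @ [a], \<beta>) \<in> congS1 \<longleftrightarrow> (\<alpha> @ [a], \<beta>) \<in> congS" if "\<alpha> \<in> L" "\<beta> \<in> L" for \<alpha> \<beta>
    using congS1_lists_iff \<alpha>a[OF that(1)] L_lists[OF that(2)] by simp
  have L_unit: "(\<alpha> @ [a], [e]) \<notin> congS1" if "\<alpha> \<in> L" for \<alpha>
    using unit_congS1_lists \<alpha>a[OF that] by simp
  have "[a] \<in> plus B"
    using a by (simp add: plus_def)
  then have unit_iff: "\<beta> \<in> L \<Longrightarrow> ([e, a], \<beta>) \<in> congS1 \<longleftrightarrow> ([a], \<beta>) \<in> congS" for \<beta>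
    using congruence_class_eq[OF congS1_is_congruence congS1_Cons_unit] congS1_lists_iff[of "[a]"] a L_lists
    by simp
  have unit_unit: "([e, a], [e]) \<notin> congS1"
    using congS1_unit_iff[of "[e, a]"] a e_notin by auto
  show ?thesis
  proof (intro equalityI subsetI)
    fix w assume "w \<in> ?lhs"
    then obtain \<alpha> \<beta> where w: "w = conv \<alpha> \<beta>" "\<alpha> \<in> K" "\<beta> \<in> K"
      and \<alpha>\<beta>: "(\<alpha> @ [a], \<beta>) \<in> congS1"
      by blast
    then have "\<beta> \<in> L"
      using L_unit unit_unit by auto
    then show "w \<in> ?rhs"
      using w \<alpha>\<beta> L_iff unit_iff by auto
  next
    fix w assume "w \<in> ?rhs"
    then consider (L) \<alpha> \<beta> where "w = conv \<alpha> \<beta>" "\<alpha> \<in> L" "\<beta> \<in> L" "(\<alpha> @ [a], \<beta>) \<in> congS"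
      | (unit) \<beta> where "w = conv [e] \<beta>" "\<beta> \<in> L" "([a], \<beta>) \<in> congS"
      by blast
    then show "w \<in> ?lhs"
    proof cases
      case L
      then show ?thesis using L_iff by blast
    next
      case unit
      then have "([e] @ [a], \<beta>) \<in> congS1"
        using unit_iff by simp
      then show ?thesis using unit by blast
    qed
  qed
qed

lemma Pref_K: "Pref K = insert [] (insert [e] (Pref L))"
  by (auto simp: Pref_def append_eq_Cons_conv)

lemma prefix_language_K:
  "{conv \<alpha> \<beta> | \<alpha> \<beta>. \<alpha> \<in> K \<and> \<beta> \<in> Pref K \<and> (\<alpha>, \<beta>) \<in> congS1}
    = insert (conv [e] [e]) {conv \<alpha> \<beta> | \<alpha> \<beta>. \<alpha> \<in> L \<and> \<beta> \<in> Pref L \<and> (\<alpha>, \<beta>) \<in> congS}"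
  (is "?lhs = _")
proof -
  have L_iff: "(\<alpha>, \<beta>) \<in> congS1 \<longleftrightarrow> (\<alpha>, \<beta>) \<in> congS" if "\<alpha> \<in> L" "\<beta> \<in> Pref L" for \<alpha> \<beta>
    using congS1_lists_iff L_lists[OF that(1)] Pref_L_lists[OF that(2)] by simp
  have unit_Pref: "([e], \<beta>) \<notin> congS1" if "\<beta> \<in> Pref L" for \<beta>
    using unit_congS1_lists Pref_L_lists[OF that] by simp
  have "conv [e] [e] \<in> ?lhs"
    using unit_congS1 Pref_K by blast
  then show ?thesis
    unfolding Pref_K using L_iff unit_Pref unit_congS1_L Nil_notin_congS1 by auto
qed

theorem prefix_automatic_K: "prefix_automatic_structure B R1 K"
  unfolding prefix_automatic_structure_def automatic_structure_def
proof (intro conjI ballI)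
  show "finite B" using finite_A by simp
  show "K \<subseteq> plus B" by (rule K_plus)
  show "regular K" using regular_L by (rule regular_insert)
  show "\<exists>u\<in>K. (u, w) \<in> congS1" if "w \<in> plus B" for w
    using K_represents that by blast
  show "regular {conv \<alpha> \<beta> | \<alpha> \<beta>. \<alpha> \<in> K \<and> \<beta> \<in> K \<and> (\<alpha>, \<beta>) \<in> congS1}"
    unfolding equality_language_K by (rule regular_insert[OF regular_equality])
  show "regular {conv \<alpha> \<beta> | \<alpha> \<beta>. \<alpha> \<in> K \<and> \<beta> \<in> K \<and> (\<alpha> @ [a], \<beta>) \<in> congS1}"
    if "a \<in> B" for a
  proof (cases "a = e")
    case True
    then show ?thesis
      unfolding True multiplier_language_K_unit equality_language_K
      by (simp add: regular_insert regular_equality)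
  next
    case False
    then have "a \<in> A" using that by simp
    then show ?thesis
      unfolding multiplier_language_K_letter[OF \<open>a \<in> A\<close>]
      using regular_multiplier L_plus finite_A
      by (intro regular_Un regular_conv_single regular_letter_representatives) auto
  qed
  show "regular {conv \<alpha> \<beta> | \<alpha> \<beta>. \<alpha> \<in> K \<and> \<beta> \<in> Pref K \<and> (\<alpha>, \<beta>) \<in> congS1}"
    unfolding prefix_language_K by (rule regular_insert[OF regular_prefix])
qed

end

theorem mainTheorem2:
  fixes A :: "'a set" and R :: "('a list \<times> 'a list) set" and L :: "'a list set" and e :: 'a
  assumes "finite A"
    and "R \<subseteq> plus A \<times> plus A"
    and "prefix_automatic_structure A R L"
    and "e \<notin> A"
  shows "prefix_automatic_structure (insert e A)
           (R \<union> {([e, a], [a]) | a. a \<in> A} \<union> {([a, e], [a]) | a. a \<in> A} \<union> {([e, e], [e])})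
           (insert [e] L)"
proof -
  \<comment> \<open>\<open>finite A\<close> is also part of \<open>prefix_automatic_structure A R L\<close>.\<close>
  interpret prefix_automatic_adjunction A R e L
    using assms(2-4) by unfold_locales
  show ?thesis
    using prefix_automatic_K by (simp only: R1_def)
qed

end
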